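(* Let $\mathcal{T}$ be a $(\rho,M)$-tree. For all $t>\dim_{\mathrm{L}}\partial\mathcal{T}$ and $\ell\in\mathbb{N}$, there exist an integer $n\geq\ell$, $Q\in\mathcal{T}_n$, and an integer $k\geq n+\ell$ such that for all $j=0,\ldots,\ell$ and all $Q'\in\mathcal{T}^Q_j$, $$\frac{\#(Q'\cap\mathcal{T}^Q_{k-n})}{\#\mathcal{T}^Q_{k-n}}\geq\rho^{tj}.$$
   Context: Inner regular partition: for a non-empty compact $K\subset\mathbb{R}^d$ and $\rho\in(0,1)$, a family $\{(Q_{i,k},x_{i,k}):k\in\mathbb{N}\cup\{0\},\ i\in\mathcal{N}_k\}$ of non-empty Borel sets $Q_{i,k}$ with points $x_{i,k}\in K\cap Q_{i,k}$ such that, for constants $c,C>0$: (i) $\#\mathcal{N}_0=1$; (ii) for each $k$, $K$ is the disjoint union of the $Q_{i,k}$, $i\in\mathcal{N}_k$; (iii) sets of levels $k\leq m$ are either disjoint or the level-$m$ set is contained in the level-$k$ set; (iv) $B(x_{i,k},c\rho^k)\subset Q_{i,k}\subset B(x_{i,k},C\rho^k)$ (closed balls); (v) $\{x_{i,k}:i\in\mathcal{N}_k\}\subset\{x_{i,k+1}:i\in\mathcal{N}_{k+1}\}$. A $(\rho,M)$-tree is a set $\mathcal{T}$ of finite words over $\mathcal{A}=\{1,\ldots,M\}$ obtained from such a partition in which each set has at most $M$ children: the root set gets the empty word, and if the set labelled $\mathtt{a}$ has children $R_1,\ldots,R_j$ ($j\leq M$), $R_i$ is labelled $\mathtt{a}i$;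 $\mathcal{T}$ is the set of labels and $\mathcal{T}_n$ the labels of length $n$. Elements of $\mathcal{T}$ are identified with cylinders $[\mathtt{a}]=\{x\in\mathcal{A}^{\mathbb{N}}:x\text{ begins with }\mathtt{a}\}$; $\partial\mathcal{T}=\bigcap_n\bigcup_{\mathtt{a}\in\mathcal{T}_n}[\mathtt{a}]$. For $Q=[\mathtt{a}]$ with $\mathtt{a}\in\mathcal{T}$, the subtree is $\mathcal{T}^Q=\{\mathtt{b}:\mathtt{a}\mathtt{b}\in\mathcal{T}\}$ and $\mathcal{T}^Q_j$ its words of length $j$. For $Q'=[\mathtt{b}']$ with $\mathtt{b}'\in\mathcal{T}^Q_j$, $\#(Q'\cap\mathcal{T}^Q_m)$ is the number of $\mathtt{b}\in\mathcal{T}^Q_m$ with $[\mathtt{b}]\subset Q'$. The lower dimension of $\partial\mathcal{T}$ is $\dim_{\mathrm{L}}\partial\mathcal{T}=\sup\{s>0:\exists C>0\ \forall 0\leq m\leq k\ \forall\mathtt{a}\in\mathcal{T}_m,\ \#\{\mathtt{b}\in\mathcal{T}_k:[\mathtt{b}]\subset[\mathtt{a}]\}\geq C\rho^{(m-k)s}\}$. *)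

theory Defs
  imports "HOL-Analysis.Analysis"
begin

text \<open>Inner regular partition of a nonempty compact set K (level k, index i),
  with sets Q k i and centres x k i, index sets N k.  Balls are balls of the
  metric space K, i.e. intersected with K.\<close>
definition inner_regular_partition ::
  "real \<Rightarrow> 'a::euclidean_space set \<Rightarrow> (nat \<Rightarrow> 'i set) \<Rightarrow> (nat \<Rightarrow> 'i \<Rightarrow> 'a set)
     \<Rightarrow> (nat \<Rightarrow> 'i \<Rightarrow> 'a) \<Rightarrow> bool" where
  "inner_regular_partition \<rho> K N Q x \<longleftrightarrow>
     K \<noteq> {} \<and> compact K \<and> 0 < \<rho> \<and> \<rho> < 1 \<and>
     (\<exists>c C. 0 < c \<and> 0 < C \<and>
       card (N 0) = 1 \<and>
       (\<forall>k. \<forall>i\<in>N k. Q k i \<noteq> {} \<and> Q k i \<in> sets borel \<and> x k i \<in> K \<inter> Q k i) \<and>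
       (\<forall>k. K = (\<Union>i\<in>N k. Q k i) \<and>
            (\<forall>i\<in>N k. \<forall>j\<in>N k. i \<noteq> j \<longrightarrow> Q k i \<inter> Q k j = {})) \<and>
       (\<forall>k m. k \<le> m \<longrightarrow> (\<forall>i\<in>N k. \<forall>j\<in>N m. Q k i \<inter> Q m j = {} \<or> Q m j \<subseteq> Q k i)) \<and>
       (\<forall>k. \<forall>i\<in>N k. K \<inter> cball (x k i) (c * \<rho> ^ k) \<subseteq> Q k i \<and>
                      Q k i \<subseteq> K \<inter> cball (x k i) (C * \<rho> ^ k)) \<and>
       (\<forall>k. x k ` N k \<subseteq> x (Suc k) ` N (Suc k)))"

definition children :: "(nat \<Rightarrow> 'i set) \<Rightarrow> (nat \<Rightarrow> 'i \<Rightarrow> 'a set) \<Rightarrow> nat \<Rightarrow> 'i \<Rightarrow> 'i set" where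
  "children N Q n i = {i' \<in> N (Suc n). Q (Suc n) i' \<subseteq> Q n i}"

text \<open>T is the set of labels of a (rho,M)-tree obtained from the partition (N,Q),
  via the labelling lab (word \<mapsto> index of the labelled set): the root gets the
  empty word, and the j children of the set labelled a are labelled a@[1],...,a@[j]
  (in some order, given by lab), with j \<le> M.\<close>
definition tree_of_partition ::
  "nat \<Rightarrow> (nat \<Rightarrow> 'i set) \<Rightarrow> (nat \<Rightarrow> 'i \<Rightarrow> 'a set) \<Rightarrow> (nat list \<Rightarrow> 'i) \<Rightarrow> nat list set \<Rightarrow> bool" where
  "tree_of_partition M N Q lab T \<longleftrightarrow>
     [] \<in> T \<and> lab [] \<in> N 0 \<and>
     (\<forall>a m. a @ [m] \<in> T \<longrightarrow> a \<in> T) \<and>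
     (\<forall>a\<in>T. card (children N Q (length a) (lab a)) \<le> M \<and>
        {m. a @ [m] \<in> T} = {1..card (children N Q (length a) (lab a))} \<and>
        bij_betw (\<lambda>m. lab (a @ [m])) {m. a @ [m] \<in> T} (children N Q (length a) (lab a)))"

definition level :: "nat list set \<Rightarrow> nat \<Rightarrow> nat list set" where
  "level T n = {a \<in> T. length a = n}"

definition subtree :: "nat list set \<Rightarrow> nat list \<Rightarrow> nat list set" where
  "subtree T a = {b. a @ b \<in> T}"

definition cylinder :: "nat \<Rightarrow> nat list \<Rightarrow> (nat \<Rightarrow> nat) set" where
  "cylinder M a = {x. (\<forall>i. x i \<in> {1..M}) \<and> (\<forall>i<length a. x i = a ! i)}"

text \<open>\#(Q' \<inter> S): number of words b in S with [b] \<subseteq> [b'].\<close>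
definition count_in :: "nat \<Rightarrow> nat list \<Rightarrow> nat list set \<Rightarrow> nat" where
  "count_in M b' S = card {b \<in> S. cylinder M b \<subseteq> cylinder M b'}"

definition lower_dim_set :: "real \<Rightarrow> nat \<Rightarrow> nat list set \<Rightarrow> real set" where
  "lower_dim_set \<rho> M T = {s. s > 0 \<and> (\<exists>C>0. \<forall>m k. m \<le> k \<longrightarrow>
      (\<forall>a\<in>level T m. real (count_in M a (level T k)) \<ge> C * \<rho> powr ((real m - real k) * s)))}"

definition lower_dim :: "real \<Rightarrow> nat \<Rightarrow> nat list set \<Rightarrow> real" where
  "lower_dim \<rho> M T = (if lower_dim_set \<rho> M T = {} then 0 else Sup (lower_dim_set \<rho> M T))"

end

theory Submission
  imports Defs "HOL-Library.Sublist"
begin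

(* If the conclusion fails, then for every node a of depth at least l and
   every k \<ge> |a| + l some proper extension ab of length j \<le> l has at most \<rho>^(tj) times as many
   level-k descendants as a. Descending along these extensions, each jump of j levels gains a
   factor \<rho>^(-tj), so strong induction on the depth gap d shows that every node has at least
   \<rho>^(t(2l - d)) descendants d levels below it. This is the defining estimate of the lower
   dimension with exponent t, hence t \<le> lower_dim, contradicting the choice of t. *)

definition descendants :: "nat list set \<Rightarrow> nat list \<Rightarrow> nat \<Rightarrow> nat list set" where
  "descendants T a k = {b \<in> T. length b = k \<and> prefix a b}"

definition has_sparse_extension ::
    "real \<Rightarrow> real \<Rightarrow> nat \<Rightarrow> nat list set \<Rightarrow> nat list \<Rightarrow> nat \<Rightarrow> bool" where
  "has_sparse_extension \<rho> t l T a k \<longleftrightarrow> (\<exists>b. a @ b \<in> T \<and> b \<noteq> [] \<and> length b \<le> l \<and>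
     real (card (descendants T (a @ b) k)) \<le> \<rho> powr (t * length b) * card (descendants T a k))"

lemma cylinder_subset_iff_prefix:
  assumes "set b \<subseteq> {1..M}" "length a \<le> length b"
  shows "cylinder M b \<subseteq> cylinder M a \<longleftrightarrow> prefix a b"
proof
  assume sub: "cylinder M b \<subseteq> cylinder M a"
  show "prefix a b"
  proof (cases "b = []")
    case True
    then show ?thesis using assms(2) by simp
  next
    case False
    then have "1 \<le> M" using assms(1) by (cases b) auto
    define z where "z i = (if i < length b then b ! i else 1)" for i
    have "z \<in> cylinder M b"
      unfolding cylinder_def z_def using assms(1) \<open>1 \<le> M\<close> nth_mem by fastforce
    then have "\<forall>i<length a. a ! i = b ! i"
      using sub assms(2) unfolding cylinder_def z_def by auto
    then have "a = take (length a) b" using assms(2) by (intro nth_equalityI) auto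
    then show ?thesis by (metis take_is_prefix)
  qed
next
  assume "prefix a b"
  then show "cylinder M b \<subseteq> cylinder M a"
    unfolding cylinder_def prefix_def by (auto simp: nth_append)
qed

lemma count_in_Nil: "count_in M [] S = card S"
proof -
  have "{c \<in> S. cylinder M c \<subseteq> cylinder M []} = S"
    unfolding cylinder_def by auto
  then show ?thesis unfolding count_in_def by simp
qed

lemma le_if_scaled_powers_le:
  fixes q r C :: real
  assumes "0 < C" "0 < r" and bound: "\<And>k. C * q ^ k \<le> r ^ k"
  shows "q \<le> r"
proof (rule ccontr)
  assume "\<not> q \<le> r"
  then have "1 < q / r" using assms(2) by simp
  then obtain k where "1 / C < (q / r) ^ k" using real_arch_pow by blast
  then have "r ^ k < C * q ^ k"
    using assms(1,2) by (simp add: power_divide field_simps)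
  with bound[of k] show False by simp
qed

locale leafless_tree =
  fixes M :: nat and T :: "nat list set"
  assumes root_in_tree: "[] \<in> T"
    and tree_alphabet: "b \<in> T \<Longrightarrow> set b \<subseteq> {1..M}"
    and has_child: "a \<in> T \<Longrightarrow> \<exists>m. a @ [m] \<in> T"
begin

lemma level_subset_lists: "level T k \<subseteq> {xs. set xs \<subseteq> {1..M} \<and> length xs = k}"
  using tree_alphabet unfolding level_def by blast

lemma card_level_le: "card (level T k) \<le> M ^ k"
proof -
  have "card (level T k) \<le> card {xs. set xs \<subseteq> {1..M} \<and> length xs = k}"
    using level_subset_lists by (intro card_mono finite_lists_length_eq) auto
  then show ?thesis by (simp add: card_lists_length_eq)
qed

lemma finite_descendants: "finite (descendants T a k)"
proof (rule finite_subset)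
  show "descendants T a k \<subseteq> {xs. set xs \<subseteq> {1..M} \<and> length xs = k}"
    using level_subset_lists unfolding descendants_def level_def by blast
qed (simp add: finite_lists_length_eq)

lemma extension_exists: "a \<in> T \<Longrightarrow> \<exists>c\<in>T. length c = length a + d \<and> prefix a c"
proof (induction d arbitrary: a)
  case (Suc d)
  then obtain m where "a @ [m] \<in> T" using has_child by blast
  with Suc.IH obtain c where "c \<in> T" "length c = length a + Suc d" "prefix (a @ [m]) c"
    by fastforce
  then show ?case by (meson prefix_order.trans prefixI)
qed auto

lemma card_descendants_pos:
  assumes "a \<in> T" "length a \<le> k"
  shows "1 \<le> card (descendants T a k)"
proof -
  obtain c where "c \<in> descendants T a k"
    using extension_exists[OF assms(1), of "k - length a"] assms(2)
    unfolding descendants_def by auto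
  then show ?thesis using finite_descendants by (simp add: Suc_le_eq card_gt_0_iff) blast
qed

lemma card_descendants_antimono:
  "prefix a c \<Longrightarrow> card (descendants T c k) \<le> card (descendants T a k)"
  unfolding descendants_def using finite_descendants[unfolded descendants_def]
  by (intro card_mono) (auto intro: prefix_order.trans)

lemma count_in_subtree_level:
  assumes "length b \<le> d"
  shows "count_in M b (level (subtree T a) d) = card (descendants T (a @ b) (length a + d))"
proof -
  have "count_in M b (level (subtree T a) d) = card {c \<in> level (subtree T a) d. prefix b c}"
    unfolding count_in_def
  proof (intro arg_cong[where f = card] Collect_cong conj_cong refl)
    fix c assume "c \<in> level (subtree T a) d"
    then have "a @ c \<in> T" and "length b \<le> length c"
      using assms unfolding level_def subtree_def by auto
    moreover from \<open>a @ c \<in> T\<close> have "set c \<subseteq> {1..M}"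
      using tree_alphabet[of "a @ c"] by simp
    ultimately show "cylinder M c \<subseteq> cylinder M b \<longleftrightarrow> prefix b c"
      by (simp add: cylinder_subset_iff_prefix)
  qed
  also have "\<dots> = card ((@) a ` {c \<in> level (subtree T a) d. prefix b c})"
    by (rule card_image[symmetric]) (simp add: inj_on_def)
  also have "(@) a ` {c \<in> level (subtree T a) d. prefix b c} = descendants T (a @ b) (length a + d)"
    unfolding level_def subtree_def descendants_def by (auto simp: prefix_def)
  finally show ?thesis .
qed

lemma card_subtree_level: "card (level (subtree T a) d) = card (descendants T a (length a + d))"
  using count_in_subtree_level[of "[]" d a] by (simp add: count_in_Nil)

lemma count_in_level: "length a \<le> k \<Longrightarrow> count_in M a (level T k) = card (descendants T a k)"
  using count_in_subtree_level[of a k "[]"] by (simp add: subtree_def)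

lemma sparse_extension_if_unbalanced:
  assumes "0 < \<rho>" "a \<in> T" "length a + l \<le> k"
    and "\<not> (\<forall>j\<le>l. \<forall>b\<in>level (subtree T a) j.
      \<rho> powr (t * real j) \<le> real (count_in M b (level (subtree T a) (k - length a)))
        / real (card (level (subtree T a) (k - length a))))"
  shows "has_sparse_extension \<rho> t l T a k"
proof -
  from assms(4) obtain b where b: "a @ b \<in> T" "length b \<le> l"
    and unbalanced: "real (count_in M b (level (subtree T a) (k - length a)))
        / real (card (level (subtree T a) (k - length a))) < \<rho> powr (t * length b)"
    unfolding level_def subtree_def by auto
  have count: "count_in M b (level (subtree T a) (k - length a)) = card (descendants T (a @ b) k)"
    using count_in_subtree_level[of b "k - length a" a] b(2) assms(3) by simp
  have total: "card (level (subtree T a) (k - length a)) = card (descendants T a k)"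
    using card_subtree_level[of a "k - length a"] assms(3) by simp
  have "0 < real (card (descendants T a k))"
    using card_descendants_pos[OF assms(2), of k] assms(3) by simp
  with unbalanced have less:
    "real (card (descendants T (a @ b) k)) < \<rho> powr (t * length b) * card (descendants T a k)"
    unfolding count total by (simp add: divide_less_eq)
  moreover have "b \<noteq> []"
  proof
    assume "b = []"
    with less show False using assms(1) by simp
  qed
  ultimately show ?thesis using b unfolding has_sparse_extension_def by auto
qed

context
  fixes \<rho> t :: real and l :: nat
  assumes rho_pos: "0 < \<rho>" and rho_less_1: "\<rho> < 1" and t_pos: "0 < t"
    and sparse_extension: "\<And>a k. a \<in> T \<Longrightarrow> l \<le> length a \<Longrightarrow> length a + l \<le> k \<Longrightarrow>
      has_sparse_extension \<rho> t l T a k"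
begin

lemma rho_powr_le_card_descendants:
  assumes "a \<in> T" "0 \<le> e"
  shows "\<rho> powr (t * e) \<le> card (descendants T a (length a + d))"
proof -
  have "\<rho> powr (t * e) \<le> 1"
    using assms(2) rho_pos rho_less_1 t_pos by (intro powr_le1) auto
  also have "\<dots> \<le> card (descendants T a (length a + d))"
    using card_descendants_pos[OF assms(1)] by simp
  finally show ?thesis .
qed

lemma card_descendants_ge_deep:
  assumes "a \<in> T" "l \<le> length a"
  shows "\<rho> powr (t * (real l - real d)) \<le> card (descendants T a (length a + d))"
  using assms
proof (induction d arbitrary: a rule: less_induct)
  case (less d)
  show ?case
  proof (cases "d < l")
    case True
    then show ?thesis
      using rho_powr_le_card_descendants[OF less.prems(1), of "real l - real d"] by simp
  next
    case False
    then have "has_sparse_extension \<rho> t l T a (length a + d)"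
      using sparse_extension[OF less.prems] by simp
    then obtain b where ab: "a @ b \<in> T" and "b \<noteq> []" "length b \<le> l"
      and shrink: "real (card (descendants T (a @ b) (length a + d)))
          \<le> \<rho> powr (t * length b) * card (descendants T a (length a + d))"
      unfolding has_sparse_extension_def by blast
    let ?j = "length b"
    have "0 < ?j" using \<open>b \<noteq> []\<close> by simp
    then have "d - ?j < d" "?j \<le> d" using \<open>?j \<le> l\<close> False by arith+
    have "\<rho> powr (t * ?j) * \<rho> powr (t * (real l - real d))
        = \<rho> powr (t * (real l - real (d - ?j)))"
      using \<open>?j \<le> d\<close> by (simp add: powr_add[symmetric] of_nat_diff algebra_simps)
    also have "\<dots> \<le> card (descendants T (a @ b) (length (a @ b) + (d - ?j)))"
      using less.IH[of "d - ?j" "a @ b"] \<open>d - ?j < d\<close> \<open>?j \<le> d\<close> ab less.prems(2) by simp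
    also have "\<dots> \<le> \<rho> powr (t * ?j) * card (descendants T a (length a + d))"
      using shrink \<open>?j \<le> d\<close> by simp
    finally show ?thesis using rho_pos by simp
  qed
qed

lemma card_descendants_ge:
  assumes "a \<in> T"
  shows "\<rho> powr (t * (2 * real l - real d)) \<le> card (descendants T a (length a + d))"
proof (cases "d < l")
  case True
  then show ?thesis
    using rho_powr_le_card_descendants[OF assms, of "2 * real l - real d"] by simp
next
  case False
  obtain c where c: "c \<in> T" "length c = length a + l" "prefix a c"
    using extension_exists[OF assms] by blast
  have "\<rho> powr (t * (2 * real l - real d)) = \<rho> powr (t * (real l - real (d - l)))"
    using False by (simp add: of_nat_diff algebra_simps)
  also have "\<dots> \<le> card (descendants T c (length c + (d - l)))"
    using card_descendants_ge_deep[OF c(1)] c(2) by simp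
  also have "\<dots> \<le> card (descendants T a (length a + d))"
    using card_descendants_antimono[OF c(3)] c(2) False by simp
  finally show ?thesis .
qed

lemma mem_lower_dim_set: "t \<in> lower_dim_set \<rho> M T"
  unfolding lower_dim_set_def
proof (intro CollectI conjI exI[of _ "\<rho> powr (2 * t * real l)"] allI impI ballI)
  show "0 < t" by (fact t_pos)
  show "0 < \<rho> powr (2 * t * real l)" using rho_pos by simp
  fix m k a assume "m \<le> k" "a \<in> level T m"
  then have "a \<in> T" "length a + (k - m) = k" unfolding level_def by auto
  have "\<rho> powr (2 * t * real l) * \<rho> powr ((real m - real k) * t)
      = \<rho> powr (t * (2 * real l - real (k - m)))"
    using \<open>m \<le> k\<close> by (simp add: powr_add[symmetric] of_nat_diff algebra_simps)
  also have "\<dots> \<le> card (descendants T a k)"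
    using card_descendants_ge[OF \<open>a \<in> T\<close>, of "k - m"] \<open>length a + (k - m) = k\<close> by simp
  also have "\<dots> = count_in M a (level T k)"
    using count_in_level \<open>length a + (k - m) = k\<close> by simp
  finally show "\<rho> powr (2 * t * real l) * \<rho> powr ((real m - real k) * t)
      \<le> real (count_in M a (level T k))" .
qed

end

lemma lower_dim_set_bdd_above:
  assumes "0 < \<rho>" "\<rho> < 1"
  shows "bdd_above (lower_dim_set \<rho> M T)"
proof (rule bdd_aboveI)
  obtain m where "[m] \<in> T" using has_child[OF root_in_tree] by auto
  then have "m \<in> {1..M}" using tree_alphabet[of "[m]"] by simp
  then have "1 \<le> M" by simp
  fix s assume "s \<in> lower_dim_set \<rho> M T"
  then obtain C where "0 < C" and lower: "\<forall>m k. m \<le> k \<longrightarrow>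
      (\<forall>a\<in>level T m. C * \<rho> powr ((real m - real k) * s) \<le> real (count_in M a (level T k)))"
    unfolding lower_dim_set_def by blast
  have scaled_bound: "C * (\<rho> powr (- s)) ^ k \<le> real M ^ k" for k
  proof -
    have "C * (\<rho> powr (- s)) ^ k = C * \<rho> powr ((real 0 - real k) * s)"
      using assms(1) by (simp add: powr_power)
    also have "\<dots> \<le> count_in M [] (level T k)"
      using lower[rule_format, of 0 k "[]"] root_in_tree unfolding level_def by simp
    also have "\<dots> \<le> real (M ^ k)"
      unfolding count_in_Nil using card_level_le by (rule of_nat_mono)
    finally show ?thesis by simp
  qed
  have "\<rho> powr (- s) \<le> M"
    using le_if_scaled_powers_le[OF \<open>0 < C\<close> _ scaled_bound] \<open>1 \<le> M\<close> by simp
  then have "ln (\<rho> powr (- s)) \<le> ln M"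
    using assms(1) \<open>1 \<le> M\<close> by (subst ln_le_cancel_iff) auto
  then have "s * - ln \<rho> \<le> ln M"
    by (simp add: ln_powr)
  moreover have "0 < - ln \<rho>" using assms by simp
  ultimately show "s \<le> ln M / - ln \<rho>" by (subst pos_le_divide_eq)
qed

lemma le_lower_dim:
  assumes "0 < \<rho>" "\<rho> < 1" "s \<in> lower_dim_set \<rho> M T"
  shows "s \<le> lower_dim \<rho> M T"
proof -
  have "lower_dim_set \<rho> M T \<noteq> {}" using assms(3) by blast
  then show ?thesis
    unfolding lower_dim_def using cSup_upper[OF assms(3) lower_dim_set_bdd_above[OF assms(1,2)]]
    by simp
qed

lemma lower_dim_nonneg:
  assumes "0 < \<rho>" "\<rho> < 1"
  shows "0 \<le> lower_dim \<rho> M T"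
proof (cases "lower_dim_set \<rho> M T = {}")
  case False
  then obtain s where "s \<in> lower_dim_set \<rho> M T" by blast
  moreover from this have "0 < s" unfolding lower_dim_set_def by blast
  ultimately show ?thesis using le_lower_dim[OF assms] by (meson order.trans less_imp_le)
qed (simp add: lower_dim_def)

end

lemma children_nonempty:
  assumes "inner_regular_partition \<rho> K N Q x" "i \<in> N n"
  shows "children N Q n i \<noteq> {}"
proof -
  from assms(1) obtain c C where
    nonempty: "\<forall>k. \<forall>i\<in>N k. Q k i \<noteq> {}" and
    cover: "\<forall>k. K = (\<Union>i\<in>N k. Q k i)" and
    nested: "\<forall>k m. k \<le> m \<longrightarrow> (\<forall>i\<in>N k. \<forall>j\<in>N m. Q k i \<inter> Q m j = {} \<or> Q m j \<subseteq> Q k i)"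
    unfolding inner_regular_partition_def by metis
  obtain p where p: "p \<in> Q n i" using nonempty assms(2) by blast
  then have "p \<in> K" using cover assms(2) by blast
  then obtain i' where i': "i' \<in> N (Suc n)" "p \<in> Q (Suc n) i'" using cover by blast
  then have "Q (Suc n) i' \<subseteq> Q n i" using nested assms(2) p by (metis disjoint_iff le_SucI order_refl)
  with i' show ?thesis unfolding children_def by blast
qed

lemma tree_of_partition_parent:
  "tree_of_partition M N Q lab T \<Longrightarrow> a @ [m] \<in> T \<Longrightarrow> a \<in> T"
  unfolding tree_of_partition_def by blast

lemma tree_of_partition_label:
  assumes "tree_of_partition M N Q lab T" "a \<in> T"
  shows "lab a \<in> N (length a)"
  using assms(2)
proof (induction a rule: rev_induct)
  case Nil
  then show ?case using assms(1) unfolding tree_of_partition_def by simp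
next
  case (snoc m a)
  then have "a \<in> T" using tree_of_partition_parent[OF assms(1)] by blast
  then have "bij_betw (\<lambda>m. lab (a @ [m])) {m. a @ [m] \<in> T} (children N Q (length a) (lab a))"
    using assms(1) unfolding tree_of_partition_def by blast
  then have "lab (a @ [m]) \<in> children N Q (length a) (lab a)"
    using snoc.prems bij_betwE by fastforce
  then show ?case unfolding children_def by simp
qed

lemma tree_of_partition_alphabet:
  assumes "tree_of_partition M N Q lab T" "a \<in> T"
  shows "set a \<subseteq> {1..M}"
  using assms(2)
proof (induction a rule: rev_induct)
  case (snoc m a)
  then have "a \<in> T" using tree_of_partition_parent[OF assms(1)] by blast
  then have "m \<in> {1..card (children N Q (length a) (lab a))}"
    and "card (children N Q (length a) (lab a)) \<le> M"
    using assms(1) snoc.prems unfolding tree_of_partition_def by blast+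
  with snoc.IH[OF \<open>a \<in> T\<close>] show ?case by auto
qed simp

lemma tree_of_partition_first_child:
  assumes "inner_regular_partition \<rho> K N Q x" "tree_of_partition M N Q lab T" "a \<in> T"
  shows "a @ [1] \<in> T"
proof -
  let ?ch = "children N Q (length a) (lab a)"
  have bij: "bij_betw (\<lambda>m. lab (a @ [m])) {m. a @ [m] \<in> T} ?ch"
    and succ: "{m. a @ [m] \<in> T} = {1..card ?ch}"
    using assms(2,3) unfolding tree_of_partition_def by blast+
  have "finite ?ch" using bij_betw_finite[OF bij] succ by simp
  moreover have "?ch \<noteq> {}"
    using children_nonempty[OF assms(1) tree_of_partition_label[OF assms(2,3)]] .
  ultimately have "1 \<le> card ?ch" by (simp add: Suc_le_eq card_gt_0_iff)
  then show ?thesis using succ by auto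
qed

lemma leafless_tree_of_partition:
  assumes "inner_regular_partition \<rho> K N Q x" "tree_of_partition M N Q lab T"
  shows "leafless_tree M T"
proof
  show "[] \<in> T" using assms(2) unfolding tree_of_partition_def by simp
  show "set b \<subseteq> {1..M}" if "b \<in> T" for b
    using tree_of_partition_alphabet[OF assms(2) that] .
  show "\<exists>m. a @ [m] \<in> T" if "a \<in> T" for a
    using tree_of_partition_first_child[OF assms that] by blast
qed

theorem corollary3p7:
  fixes \<rho> :: real and M :: nat and K :: "'a::euclidean_space set"
    and N :: "nat \<Rightarrow> 'i set" and Q :: "nat \<Rightarrow> 'i \<Rightarrow> 'a set" and x :: "nat \<Rightarrow> 'i \<Rightarrow> 'a"
    and lab :: "nat list \<Rightarrow> 'i" and T :: "nat list set"
    and t :: real and l :: nat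
  assumes "inner_regular_partition \<rho> K N Q x"
    and "tree_of_partition M N Q lab T"
    and "t > lower_dim \<rho> M T"
    and "l \<ge> 1"
  shows "\<exists>n\<ge>l. \<exists>a\<in>level T n. \<exists>k\<ge>n + l. \<forall>j\<le>l. \<forall>b'\<in>level (subtree T a) j.
           real (count_in M b' (level (subtree T a) (k - n)))
             / real (card (level (subtree T a) (k - n))) \<ge> \<rho> powr (t * real j)"
proof (rule ccontr)
  assume no_balanced_node: "\<not> ?thesis"
  interpret leafless_tree M T using leafless_tree_of_partition[OF assms(1,2)] .
  have rho: "0 < \<rho>" "\<rho> < 1"
    using assms(1) unfolding inner_regular_partition_def by auto
  have "0 < t" using lower_dim_nonneg[OF rho] assms(3) by linarith
  moreover have "has_sparse_extension \<rho> t l T a k" if "a \<in> T" "l \<le> length a" "length a + l \<le> k" for a k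
    using sparse_extension_if_unbalanced[OF rho(1) that(1,3)] no_balanced_node that
    unfolding level_def by auto
  ultimately have "t \<in> lower_dim_set \<rho> M T"
    by (rule mem_lower_dim_set[OF rho])
  then have "t \<le> lower_dim \<rho> M T" using le_lower_dim[OF rho] by blast
  with assms(3) show False by simp
qed

end
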